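(* Assume A1 and A2, and let $W$ be a compact neighborhood of $A$ with $\vartheta^{(t)}W\subset\vartheta^{(t')}W$ for $t\ge t'\ge0$ and $\bigcap_{t\ge0}\vartheta^{(t)}W=A$. Then: (1) for all $i$, $t,t_0$, $s_0$: $\sum_{j=1}^m U_{ij}(t,t_0,s_0)=\breve U(t,t_0,s_0)$, where $U(t,t_0,s_0)=(U_{ij}(t,t_0,s_0))_{i,j=1}^m$ with $n\times n$ blocks and $\breve U(t,t_0,s_0)$ is the solution matrix of $\dot u=\frac{\partial f}{\partial s}(s(t))u$, $s(t_0)=s_0$; (2) for any given $t\ge0$, $U(t+t_0,t_0,s_0)$ is bounded uniformly over all $t_0\ge0$ and $s_0\in W$, and the family $\{s_0\mapsto U(t+t_0,t_0,s_0)\}_{t_0\ge0}$ is equicontinuous on $W$.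
   Context: Assumption A1: there are functions $f^i:\mathbb R^{nm}\times[0,\infty)\to\mathbb R^n$, $i=1,\dots,m$, and $f:\mathbb R^n\to\mathbb R^n$ such that (a) $f^i(s,\dots,s,t)=f(s)$ for all $i,s,t$; (b) $x\mapsto f^i(x,t)$ is $C^1$ for each $t$, with Jacobian $DF^t(x)=(\partial f^i/\partial x^j(x,t))_{i,j}\in\mathbb R^{nm\times nm}$; (c) $\|DF^t(x)\|\le\phi(x)$ for some locally bounded $\phi$; (d) $\|DF^t(x)-DF^t(y)\|\le K(x,y)\|x-y\|$ for some locally bounded $K$, all $t$; (e) $f^i(x,t)$ and $DF^t(x)$ are measurable in $t$. Assumption A2: with $\vartheta^{(t)}$ the semiflow of $\dot s=f(s)$, there is a compact $A\subset\mathbb R^n$ with (a) $\vartheta^{(t)}A\subset A$; (b) an open bounded neighborhood $U$ of $A$ with $\bigcap_{t\ge0}\vartheta^{(t)}\overline U=A$; (c) some $s_0\in A$ whose $\omega$-limit set equals $A$. $s(t)$ solves $\dot s=f(s)$, $s(t_0)=s_0$; $U(t,t_0,s_0)$ is the solution matrix (identity at $t_0$) of $\dot{\delta x}=DF^t(\hat s(t))\delta x$ with $\hat s=[s^\top,\dots,s^\top]^\top\in\mathbb R^{nm}$. *)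

theory Defs
  imports "HOL-Analysis.Analysis"
begin

definition locally_bounded :: "('a::metric_space \<Rightarrow> real) \<Rightarrow> bool" where
  "locally_bounded g \<longleftrightarrow> (\<forall>x. \<exists>e>0. bounded (g ` ball x e))"

definition ode_sol :: "('a::real_normed_vector \<Rightarrow> 'a) \<Rightarrow> real set \<Rightarrow> real \<Rightarrow> 'a \<Rightarrow> (real \<Rightarrow> 'a) \<Rightarrow> bool" where
  "ode_sol f T t0 x0 x \<longleftrightarrow> t0 \<in> T \<and> x t0 = x0 \<and>
     (\<forall>\<tau>\<in>T. (x has_vector_derivative f (x \<tau>)) (at \<tau> within T))"

text \<open>Caratheodory (integral-equation) solution of the non-autonomous ODE  x' = A t x
  on the interval T with x t0 = x0 (A only measurable in t).\<close>
definition car_sol :: "(real \<Rightarrow> 'a::real_normed_vector \<Rightarrow> 'a) \<Rightarrow> real set \<Rightarrow> real \<Rightarrow> 'a \<Rightarrow> (real \<Rightarrow> 'a) \<Rightarrow> bool" where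
  "car_sol A T t0 x0 x \<longleftrightarrow> t0 \<in> T \<and> x t0 = x0 \<and> continuous_on T x \<and>
     (\<forall>t\<in>T. t0 \<le> t \<longrightarrow> ((\<lambda>\<tau>. A \<tau> (x \<tau>)) has_integral (x t - x0)) {t0..t}) \<and>
     (\<forall>t\<in>T. t \<le> t0 \<longrightarrow> ((\<lambda>\<tau>. A \<tau> (x \<tau>)) has_integral (x0 - x t)) {t..t0})"

text \<open>Image of a set S under the time-t map of the semiflow of  s' = f s  (t \<ge> 0).\<close>
definition flow_img :: "('a::real_normed_vector \<Rightarrow> 'a) \<Rightarrow> real \<Rightarrow> 'a set \<Rightarrow> 'a set" where
  "flow_img f t S = {y. \<exists>x s. s \<in> S \<and> ode_sol f {0..t} 0 s x \<and> x t = y}"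

definition omega_limit :: "('a::real_normed_vector \<Rightarrow> 'a) \<Rightarrow> 'a \<Rightarrow> 'a set" where
  "omega_limit f s0 = {y. \<exists>x. ode_sol f {0..} 0 s0 x \<and>
      (\<exists>tn::nat \<Rightarrow> real. filterlim tn at_top sequentially \<and> (\<lambda>k. x (tn k)) \<longlonglongrightarrow> y)}"

definition hat :: "'b \<Rightarrow> 'b ^ 'm" where
  "hat s = (\<chi> i. s)"

definition block :: "(real^'n^'m \<Rightarrow> real^'n^'m) \<Rightarrow> 'm \<Rightarrow> 'm \<Rightarrow> real^'n \<Rightarrow> real^'n" where
  "block M i j u = (M (\<chi> k. if k = j then u else 0)) $ i"

end

theory Submission
  imports Defs
begin

text \<open>Since F (hat s) t = hat (f s) on the diagonal, differentiation gives
  DF t (hat s) (hat w) = hat (f'(s) w). Hence both the block row sums of U applied to u and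
  the diagonal copy of the reduced solution solve the variational equation with initial value
  hat u, and Gronwall's inequality makes solutions of such linear equations unique; this is (1).
  For (2), trajectories from W stay in W, where DF is bounded and Lipschitz along the diagonal
  and f is Lipschitz. Gronwall bounds U(t + t0, t0, s0) by exp (\<Phi> t), and comparing the
  variational equations of two initial points, whose coefficients differ by
  O(|s1 - s0| exp (L t)), bounds the difference of the solutions by R |s1 - s0| with R
  independent of t0.\<close>

section \<open>Gronwall's inequality\<close>

lemma gronwall_le_exp:
  fixes u :: "real \<Rightarrow> real"
  assumes cont: "continuous_on {a..b} u" and K: "0 \<le> K"
    and le: "\<And>r. r \<in> {a..b} \<Longrightarrow> u r \<le> C + K * integral {a..r} u"
    and r: "r \<in> {a..b}"
  shows "u r \<le> C * exp (K * (r - a))"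
proof -
  define w where "w r = C + K * integral {a..r} u" for r
  define g where "g r = w r * exp (- (K * (r - a)))" for r
  have w_deriv: "(w has_real_derivative K * u x) (at x within {a..b})" if "x \<in> {a..b}" for x
    unfolding w_def using integral_has_real_derivative[OF cont that]
    by (auto intro!: derivative_eq_intros)
  have g_deriv:
    "(g has_real_derivative (K * u x - K * w x) * exp (- (K * (x - a)))) (at x within {a..b})"
    if "x \<in> {a..b}" for x
    unfolding g_def
    by (rule derivative_eq_intros w_deriv[OF that] refl)+ (simp add: algebra_simps)
  have "continuous_on {a..b} g"
    using g_deriv by (meson DERIV_continuous continuous_on_eq_continuous_within)
  \<comment> \<open>g is non-increasing because its derivative has the sign of u - w \<le> 0\<close>
  have "g r \<le> g a"
  proof (rule DERIV_nonpos_imp_decreasing_open[of a r g])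
    show "a \<le> r" "continuous_on {a..r} g"
      using r \<open>continuous_on {a..b} g\<close> by (auto elim: continuous_on_subset)
    fix x assume x: "a < x" "x < r"
    then have xab: "x \<in> {a..b}" using r by auto
    have "K * u x \<le> K * w x"
      unfolding w_def by (rule mult_left_mono[OF le[OF xab] K])
    then have "(K * u x - K * w x) * exp (- (K * (x - a))) \<le> 0"
      by (intro mult_nonpos_nonneg) auto
    moreover have "(g has_real_derivative (K * u x - K * w x) * exp (- (K * (x - a)))) (at x)"
      using g_deriv[OF xab] x r
      by (metis at_within_Icc_at atLeastAtMost_iff le_less_trans less_eq_real_def)
    ultimately show "\<exists>y. (g has_real_derivative y) (at x) \<and> y \<le> 0"
      by blast
  qed
  then have "w r * exp (- (K * (r - a))) * exp (K * (r - a)) \<le> C * exp (K * (r - a))"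
    by (intro mult_right_mono) (simp_all add: g_def w_def)
  then have "w r \<le> C * exp (K * (r - a))"
    by (simp add: mult.assoc flip: exp_add)
  moreover have "u r \<le> w r" using le[OF r] by (simp add: w_def)
  ultimately show ?thesis by linarith
qed

lemma has_integral_norm_le_integral:
  fixes g :: "real \<Rightarrow> 'a::banach"
  assumes "(g has_integral I) {a..b}" "continuous_on {a..b} h"
    and "\<And>\<tau>. \<tau> \<in> {a..b} \<Longrightarrow> norm (g \<tau>) \<le> h \<tau>"
  shows "norm I \<le> integral {a..b} h"
  using integral_norm_bound_integral[OF has_integral_integrable[OF assms(1)]
      integrable_continuous_real[OF assms(2)] assms(3)] assms(1)
  by (simp add: integral_unique)

lemma gronwall_integral_equation:
  fixes z g :: "real \<Rightarrow> 'a::banach"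
  assumes z: "continuous_on {a..b} z" and M: "0 \<le> M" and P: "0 \<le> P"
    and int: "\<And>r. r \<in> {a..b} \<Longrightarrow> (g has_integral (z r - z a)) {a..r}"
    and g: "\<And>\<tau>. \<tau> \<in> {a..b} \<Longrightarrow> norm (g \<tau>) \<le> M * norm (z \<tau>) + P"
    and r: "r \<in> {a..b}"
  shows "norm (z r) \<le> (norm (z a) + P * (b - a)) * exp (M * (r - a))"
proof -
  define u where "u \<tau> = norm (z \<tau>)" for \<tau>
  have u: "continuous_on {a..b} u" unfolding u_def using z by (intro continuous_intros)
  have "u q \<le> (norm (z a) + P * (b - a)) + M * integral {a..q} u" if q: "q \<in> {a..b}" for q
  proof -
    have uq: "continuous_on {a..q} u" using u q by (auto elim: continuous_on_subset)
    have "norm (z q - z a) \<le> integral {a..q} (\<lambda>\<tau>. M * u \<tau> + P)"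
      by (rule has_integral_norm_le_integral[OF int[OF q]])
        (use uq q g in \<open>auto simp: u_def intro!: continuous_intros\<close>)
    also have "\<dots> = M * integral {a..q} u + P * (q - a)"
      using uq q by (simp add: integral_add integrable_continuous_real continuous_intros)
    also have "\<dots> \<le> M * integral {a..q} u + P * (b - a)"
      using q P by (auto intro: mult_left_mono)
    finally show ?thesis
      using norm_triangle_ineq[of "z a" "z q - z a"] by (simp add: u_def)
  qed
  from gronwall_le_exp[OF u M this r] show ?thesis by (simp add: u_def)
qed

section \<open>Linear equations in integral form\<close>

lemma car_sol_reflect:
  assumes "car_sol A T t0 x0 x"
  shows "car_sol (\<lambda>\<tau> v. - A (- \<tau>) v) (uminus ` T) (- t0) x0 (\<lambda>\<tau>. x (- \<tau>))"
  unfolding car_sol_def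
proof (intro conjI ballI impI)
  have sol: "t0 \<in> T" "x t0 = x0" "continuous_on T x"
    using assms by (simp_all add: car_sol_def)
  show "- t0 \<in> uminus ` T" "x (- (- t0)) = x0"
    using sol by auto
  have "uminus ` uminus ` T \<subseteq> T" by auto
  then show "continuous_on (uminus ` T) (\<lambda>\<tau>. x (- \<tau>))"
    by (intro continuous_on_compose2[OF sol(3) continuous_on_minus[OF continuous_on_id]])
  fix t assume "t \<in> uminus ` T"
  then have t: "- t \<in> T" by auto
  show "((\<lambda>\<tau>. - A (- \<tau>) (x (- \<tau>))) has_integral (x (- t) - x0)) {- t0..t}" if "- t0 \<le> t"
  proof -
    have "((\<lambda>\<tau>. A \<tau> (x \<tau>)) has_integral (x0 - x (- t))) {- t..t0}"
      using assms t that by (auto simp: car_sol_def)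
    then have "((\<lambda>\<tau>. A (- \<tau>) (x (- \<tau>))) has_integral (x0 - x (- t))) {- t0..t}"
      using has_integral_reflect_real[of "\<lambda>\<tau>. A \<tau> (x \<tau>)" "x0 - x (- t)" t0 "- t"] by simp
    from has_integral_neg[OF this] show ?thesis by simp
  qed
  show "((\<lambda>\<tau>. - A (- \<tau>) (x (- \<tau>))) has_integral (x0 - x (- t))) {t..- t0}" if "t \<le> - t0"
  proof -
    have "((\<lambda>\<tau>. A \<tau> (x \<tau>)) has_integral (x (- t) - x0)) {t0..- t}"
      using assms t that by (auto simp: car_sol_def)
    then have "((\<lambda>\<tau>. A (- \<tau>) (x (- \<tau>))) has_integral (x (- t) - x0)) {t..- t0}"
      using has_integral_reflect_real[of "\<lambda>\<tau>. A \<tau> (x \<tau>)" "x (- t) - x0" "- t" t0] by simp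
    from has_integral_neg[OF this] show ?thesis by simp
  qed
qed

lemma car_sol_linear_unique_forward:
  fixes A :: "real \<Rightarrow> 'a::banach \<Rightarrow> 'a"
  assumes x: "car_sol A T t0 x0 x" and y: "car_sol A T t0 x0 y"
    and lin: "\<And>\<tau>. linear (A \<tau>)"
    and seg: "{t0..t} \<subseteq> T" and t: "t0 \<le> t" and M: "0 \<le> M"
    and bound: "\<And>\<tau> w. \<tau> \<in> {t0..t} \<Longrightarrow> norm (A \<tau> w) \<le> M * norm w"
  shows "x t = y t"
proof -
  have init: "x t0 = x0" "y t0 = x0" using x y by (simp_all add: car_sol_def)
  have "norm (x t - y t) \<le> (norm (x t0 - y t0) + 0 * (t - t0)) * exp (M * (t - t0))"
  proof (rule gronwall_integral_equation[OF _ M order_refl])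
    show "continuous_on {t0..t} (\<lambda>\<tau>. x \<tau> - y \<tau>)"
      using x y seg unfolding car_sol_def by (intro continuous_intros) (auto elim: continuous_on_subset)
    fix r assume r: "r \<in> {t0..t}"
    have "((\<lambda>\<tau>. A \<tau> (x \<tau>) - A \<tau> (y \<tau>)) has_integral ((x r - x0) - (y r - x0))) {t0..r}"
      using x y r seg unfolding car_sol_def by (intro has_integral_diff) auto
    then show "((\<lambda>\<tau>. A \<tau> (x \<tau>) - A \<tau> (y \<tau>)) has_integral (x r - y r - (x t0 - y t0))) {t0..r}"
      by (simp add: init)
    show "norm (A r (x r) - A r (y r)) \<le> M * norm (x r - y r) + 0"
      using bound[OF r] by (simp add: linear_diff[OF lin, symmetric])
  qed (use t in auto)
  then have "norm (x t - y t) \<le> 0" by (simp add: init)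
  then show ?thesis by simp
qed

text \<open>Backward uniqueness is reduced to forward uniqueness by reversing time.\<close>

lemma car_sol_linear_unique:
  fixes A :: "real \<Rightarrow> 'a::banach \<Rightarrow> 'a"
  assumes x: "car_sol A T t0 x0 x" and y: "car_sol A T t0 x0 y"
    and lin: "\<And>\<tau>. linear (A \<tau>)"
    and seg: "{min t0 t..max t0 t} \<subseteq> T" and M: "0 \<le> M"
    and bound: "\<And>\<tau> w. \<tau> \<in> {min t0 t..max t0 t} \<Longrightarrow> norm (A \<tau> w) \<le> M * norm w"
  shows "x t = y t"
proof (cases "t0 \<le> t")
  case True
  then show ?thesis
    using car_sol_linear_unique_forward[OF x y lin _ True M] seg bound by simp
next
  case False
  have "x (- (- t)) = y (- (- t))"
  proof (rule car_sol_linear_unique_forward[OF car_sol_reflect[OF x] car_sol_reflect[OF y] _ _ _ M])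
    show "linear (\<lambda>v. - A (- \<tau>) v)" for \<tau> using lin by (rule linear_compose_neg)
    show "{- t0..- t} \<subseteq> uminus ` T"
    proof
      fix \<tau> assume "\<tau> \<in> {- t0..- t}"
      then have "- \<tau> \<in> T" using seg False by auto
      then show "\<tau> \<in> uminus ` T" by (rule rev_image_eqI) simp
    qed
    show "norm (- A (- \<tau>) w) \<le> M * norm w" if "\<tau> \<in> {- t0..- t}" for \<tau> w
      using bound[of "- \<tau>" w] that False by simp
  qed (use False in simp)
  then show ?thesis by simp
qed

lemma car_sol_sum:
  fixes A :: "real \<Rightarrow> 'a::real_normed_vector \<Rightarrow> 'a"
  assumes "finite J" "t0 \<in> T" and lin: "\<And>\<tau>. linear (A \<tau>)"
    and sol: "\<And>j. j \<in> J \<Longrightarrow> car_sol A T t0 (v j) (x j)"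
  shows "car_sol A T t0 (\<Sum>j\<in>J. v j) (\<lambda>t. \<Sum>j\<in>J. x j t)"
  unfolding car_sol_def
proof (intro conjI ballI impI)
  have sum_A: "A \<tau> (\<Sum>j\<in>J. x j \<tau>) = (\<Sum>j\<in>J. A \<tau> (x j \<tau>))" for \<tau>
    by (rule linear_sum[OF lin])
  show "t0 \<in> T" by fact
  show "(\<Sum>j\<in>J. x j t0) = (\<Sum>j\<in>J. v j)"
    using sol unfolding car_sol_def by (intro sum.cong) simp_all
  show "continuous_on T (\<lambda>t. \<Sum>j\<in>J. x j t)"
    using sol unfolding car_sol_def by (intro continuous_on_sum) simp
  fix t assume t: "t \<in> T"
  show "((\<lambda>\<tau>. A \<tau> (\<Sum>j\<in>J. x j \<tau>)) has_integral (\<Sum>j\<in>J. x j t) - (\<Sum>j\<in>J. v j)) {t0..t}"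
    if "t0 \<le> t"
  proof -
    have "((\<lambda>\<tau>. \<Sum>j\<in>J. A \<tau> (x j \<tau>)) has_integral (\<Sum>j\<in>J. x j t - v j)) {t0..t}"
      using sol t that unfolding car_sol_def by (intro has_integral_sum[OF \<open>finite J\<close>]) simp
    then show ?thesis by (simp only: sum_A sum_subtractf)
  qed
  show "((\<lambda>\<tau>. A \<tau> (\<Sum>j\<in>J. x j \<tau>)) has_integral (\<Sum>j\<in>J. v j) - (\<Sum>j\<in>J. x j t)) {t..t0}"
    if "t \<le> t0"
  proof -
    have "((\<lambda>\<tau>. \<Sum>j\<in>J. A \<tau> (x j \<tau>)) has_integral (\<Sum>j\<in>J. v j - x j t)) {t..t0}"
      using sol t that unfolding car_sol_def by (intro has_integral_sum[OF \<open>finite J\<close>]) simp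
    then show ?thesis by (simp only: sum_A sum_subtractf)
  qed
qed

lemma car_sol_linear_image:
  fixes L :: "'a::real_normed_vector \<Rightarrow> 'b::real_normed_vector"
  assumes sol: "car_sol B T t0 u x" and T: "is_interval T" and L: "bounded_linear L"
    and comm: "\<And>\<tau> y. \<tau> \<in> T \<Longrightarrow> A \<tau> (L y) = L (B \<tau> y)"
  shows "car_sol A T t0 (L u) (\<lambda>t. L (x t))"
  unfolding car_sol_def
proof (intro conjI ballI impI)
  have t0: "t0 \<in> T" and init: "x t0 = u" and cont: "continuous_on T x"
    using sol by (simp_all add: car_sol_def)
  show "t0 \<in> T" "L (x t0) = L u"
    using t0 init by simp_all
  show "continuous_on T (\<lambda>t. L (x t))"
    by (rule continuous_on_compose2[OF linear_continuous_on[OF L] cont subset_UNIV])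
  have L_int: "((\<lambda>\<tau>. A \<tau> (L (x \<tau>))) has_integral L I) {a..b}"
    if int: "((\<lambda>\<tau>. B \<tau> (x \<tau>)) has_integral I) {a..b}" and ab: "a \<in> T" "b \<in> T" for a b I
  proof -
    have inT: "\<tau> \<in> T" if "\<tau> \<in> {a..b}" for \<tau>
      using mem_is_interval_1_I[OF T ab] that by simp
    have "(L \<circ> (\<lambda>\<tau>. B \<tau> (x \<tau>)) has_integral L I) {a..b}"
      by (rule has_integral_linear[OF int L])
    then show ?thesis
      by (rule has_integral_eq[rotated]) (simp add: comm inT)
  qed
  have L_diff: "L (a - b) = L a - L b" for a b
    by (rule linear_diff[OF bounded_linear.linear[OF L]])
  fix t assume t: "t \<in> T"
  show "((\<lambda>\<tau>. A \<tau> (L (x \<tau>))) has_integral L (x t) - L u) {t0..t}" if "t0 \<le> t"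
    using L_int[where a = t0 and b = t and I = "x t - u"] sol t t0 that unfolding car_sol_def L_diff by simp
  show "((\<lambda>\<tau>. A \<tau> (L (x \<tau>))) has_integral L u - L (x t)) {t..t0}" if "t \<le> t0"
    using L_int[where a = t and b = t0 and I = "u - x t"] sol t t0 that unfolding car_sol_def L_diff by simp
qed

lemma car_sol_norm_le:
  fixes A :: "real \<Rightarrow> 'a::banach \<Rightarrow> 'a"
  assumes x: "car_sol A {t0..} t0 v x" and M: "0 \<le> M"
    and bound: "\<And>\<tau> w. \<tau> \<in> {t0..b} \<Longrightarrow> norm (A \<tau> w) \<le> M * norm w"
    and r: "r \<in> {t0..b}"
  shows "norm (x r) \<le> norm v * exp (M * (r - t0))"
proof -
  have init: "x t0 = v" and cont: "continuous_on {t0..} x"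
    and int: "\<And>q. t0 \<le> q \<Longrightarrow> ((\<lambda>\<tau>. A \<tau> (x \<tau>)) has_integral (x q - v)) {t0..q}"
    using x by (simp_all add: car_sol_def)
  have "norm (x r) \<le> (norm (x t0) + 0 * (b - t0)) * exp (M * (r - t0))"
  proof (rule gronwall_integral_equation[OF _ M order_refl _ _ r])
    show "continuous_on {t0..b} x" using cont by (rule continuous_on_subset) auto
    show "((\<lambda>\<tau>. A \<tau> (x \<tau>)) has_integral (x q - x t0)) {t0..q}" if "q \<in> {t0..b}" for q
      using int[of q] that by (simp add: init)
    show "norm (A \<tau> (x \<tau>)) \<le> M * norm (x \<tau>) + 0" if "\<tau> \<in> {t0..b}" for \<tau>
      using bound[OF that] by simp
  qed
  then show ?thesis by (simp add: init)
qed

lemma car_sol_perturbation: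
  fixes A0 A1 :: "real \<Rightarrow> 'a::banach \<Rightarrow> 'a"
  assumes x1: "car_sol A1 {t0..} t0 v x1" and x0: "car_sol A0 {t0..} t0 v x0"
    and lin: "\<And>\<tau>. linear (A1 \<tau>)" and M: "0 \<le> M"
    and bound: "\<And>\<tau> w. \<tau> \<in> {t0..b} \<Longrightarrow> norm (A1 \<tau> w) \<le> M * norm w"
    and P: "0 \<le> P" and defect: "\<And>\<tau>. \<tau> \<in> {t0..b} \<Longrightarrow> norm (A1 \<tau> (x0 \<tau>) - A0 \<tau> (x0 \<tau>)) \<le> P"
    and r: "r \<in> {t0..b}"
  shows "norm (x1 r - x0 r) \<le> P * (b - t0) * exp (M * (r - t0))"
proof -
  have init: "x1 t0 = v" "x0 t0 = v" and cont: "continuous_on {t0..} x1" "continuous_on {t0..} x0"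
    and int1: "\<And>q. t0 \<le> q \<Longrightarrow> ((\<lambda>\<tau>. A1 \<tau> (x1 \<tau>)) has_integral (x1 q - v)) {t0..q}"
    and int0: "\<And>q. t0 \<le> q \<Longrightarrow> ((\<lambda>\<tau>. A0 \<tau> (x0 \<tau>)) has_integral (x0 q - v)) {t0..q}"
    using x1 x0 by (simp_all add: car_sol_def)
  have "norm (x1 r - x0 r) \<le> (norm (x1 t0 - x0 t0) + P * (b - t0)) * exp (M * (r - t0))"
  proof (rule gronwall_integral_equation[OF _ M P _ _ r])
    show "continuous_on {t0..b} (\<lambda>\<tau>. x1 \<tau> - x0 \<tau>)"
      using cont by (intro continuous_intros) (auto elim: continuous_on_subset)
    show "((\<lambda>\<tau>. A1 \<tau> (x1 \<tau>) - A0 \<tau> (x0 \<tau>)) has_integral (x1 q - x0 q - (x1 t0 - x0 t0))) {t0..q}"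
      if "q \<in> {t0..b}" for q
      using has_integral_diff[OF int1[of q] int0[of q]] that by (simp add: init)
    show "norm (A1 \<tau> (x1 \<tau>) - A0 \<tau> (x0 \<tau>)) \<le> M * norm (x1 \<tau> - x0 \<tau>) + P"
      if "\<tau> \<in> {t0..b}" for \<tau>
    proof -
      have "norm (A1 \<tau> (x1 \<tau>) - A0 \<tau> (x0 \<tau>))
          = norm (A1 \<tau> (x1 \<tau> - x0 \<tau>) + (A1 \<tau> (x0 \<tau>) - A0 \<tau> (x0 \<tau>)))"
        by (simp add: linear_diff[OF lin])
      also have "\<dots> \<le> norm (A1 \<tau> (x1 \<tau> - x0 \<tau>)) + norm (A1 \<tau> (x0 \<tau>) - A0 \<tau> (x0 \<tau>))"
        by (rule norm_triangle_ineq)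
      also have "\<dots> \<le> M * norm (x1 \<tau> - x0 \<tau>) + P"
        using bound[OF that] defect[OF that] by (rule add_mono)
      finally show ?thesis .
    qed
  qed
  then show ?thesis by (simp add: init)
qed

section \<open>Trajectories of the reduced system\<close>

lemma ode_sol_continuous_on: "ode_sol f T t0 x0 x \<Longrightarrow> continuous_on T x"
  unfolding ode_sol_def
  by (meson continuous_on_eq_continuous_within has_vector_derivative_continuous)

lemma ode_sol_has_integral:
  fixes f :: "'a::banach \<Rightarrow> 'a"
  assumes S: "ode_sol f {t0..} t0 s0 S" and r: "t0 \<le> r"
  shows "((\<lambda>\<tau>. f (S \<tau>)) has_integral (S r - s0)) {t0..r}"
proof -
  have "((\<lambda>\<tau>. f (S \<tau>)) has_integral (S r - S t0)) {t0..r}"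
    by (rule fundamental_theorem_of_calculus[OF r])
      (use S in \<open>auto simp: ode_sol_def intro: has_vector_derivative_within_subset\<close>)
  then show ?thesis using S by (simp add: ode_sol_def)
qed

lemma ode_sol_dist_le:
  fixes f :: "'a::banach \<Rightarrow> 'a"
  assumes S1: "ode_sol f {t0..} t0 s1 S1" and S0: "ode_sol f {t0..} t0 s0 S0" and L: "0 \<le> L"
    and lip: "\<And>\<tau>. \<tau> \<in> {t0..b} \<Longrightarrow> norm (f (S1 \<tau>) - f (S0 \<tau>)) \<le> L * norm (S1 \<tau> - S0 \<tau>)"
    and r: "r \<in> {t0..b}"
  shows "norm (S1 r - S0 r) \<le> norm (s1 - s0) * exp (L * (r - t0))"
proof -
  have init: "S1 t0 = s1" "S0 t0 = s0" using S1 S0 by (simp_all add: ode_sol_def)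
  have "norm (S1 r - S0 r) \<le> (norm (S1 t0 - S0 t0) + 0 * (b - t0)) * exp (L * (r - t0))"
  proof (rule gronwall_integral_equation[OF _ L order_refl _ _ r])
    show "continuous_on {t0..b} (\<lambda>\<tau>. S1 \<tau> - S0 \<tau>)"
      using ode_sol_continuous_on[OF S1] ode_sol_continuous_on[OF S0]
      by (intro continuous_intros) (auto elim: continuous_on_subset)
    show "((\<lambda>\<tau>. f (S1 \<tau>) - f (S0 \<tau>)) has_integral (S1 q - S0 q - (S1 t0 - S0 t0))) {t0..q}"
      if "q \<in> {t0..b}" for q
      using has_integral_diff[OF ode_sol_has_integral[OF S1] ode_sol_has_integral[OF S0], of q] that
      by (simp add: init algebra_simps)
  qed (use lip in simp)
  then show ?thesis by (simp add: init)
qed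

lemma flow_img_zero_subset: "flow_img f 0 S \<subseteq> S"
  unfolding flow_img_def ode_sol_def by auto

lemma ode_sol_in_flow_img:
  fixes f :: "'a::real_normed_vector \<Rightarrow> 'a"
  assumes S: "ode_sol f {t0..} t0 s0 S" and s0: "s0 \<in> W" and \<tau>: "t0 \<le> \<tau>"
  shows "S \<tau> \<in> flow_img f (\<tau> - t0) W"
proof -
  define x where "x r = S (r + t0)" for r
  have "ode_sol f {0..\<tau> - t0} 0 s0 x"
    unfolding ode_sol_def
  proof (intro conjI ballI)
    show "0 \<in> {0..\<tau> - t0}" using \<tau> by auto
    show "x 0 = s0" using S by (simp add: x_def ode_sol_def)
    fix \<rho> assume \<rho>: "\<rho> \<in> {0..\<tau> - t0}"
    have shift: "((\<lambda>r. r + t0) has_vector_derivative 1) (at \<rho> within {0..\<tau> - t0})"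
      by (auto intro!: derivative_eq_intros)
    have "(S has_vector_derivative f (S (\<rho> + t0))) (at (\<rho> + t0) within {t0..})"
      using S \<rho> by (auto simp: ode_sol_def)
    then have "(S has_vector_derivative f (S (\<rho> + t0)))
        (at ((\<lambda>r. r + t0) \<rho>) within (\<lambda>r. r + t0) ` {0..\<tau> - t0})"
      by (rule has_vector_derivative_within_subset) auto
    from vector_diff_chain_within[OF shift this]
    show "(x has_vector_derivative f (x \<rho>)) (at \<rho> within {0..\<tau> - t0})"
      by (simp add: x_def[abs_def] o_def)
  qed
  moreover have "x (\<tau> - t0) = S \<tau>" by (simp add: x_def)
  ultimately show ?thesis unfolding flow_img_def using s0 by blast
qed

section \<open>The coupled system along the diagonal\<close>

lemma locally_bounded_bounded_on_compact:
  fixes g :: "'a::metric_space \<Rightarrow> real"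
  assumes "locally_bounded g" "compact S"
  shows "\<exists>B\<ge>0. \<forall>x\<in>S. \<bar>g x\<bar> \<le> B"
proof -
  have "\<forall>x. \<exists>e>0. \<exists>b. \<forall>y\<in>ball x e. \<bar>g y\<bar> \<le> b"
    using assms(1) unfolding locally_bounded_def bounded_iff by fastforce
  then obtain e b where eb: "\<And>x. e x > 0" "\<And>x y. y \<in> ball x (e x) \<Longrightarrow> \<bar>g y\<bar> \<le> b x"
    by metis
  obtain D where D: "D \<subseteq> S" "finite D" "S \<subseteq> (\<Union>c\<in>D. ball c (e c))"
    by (rule compactE_image[OF assms(2), of S "\<lambda>c. ball c (e c)"]) (use eb(1) in auto)
  define B where "B = Max (insert 0 (b ` D))"
  have "\<bar>g x\<bar> \<le> B" if "x \<in> S" for x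
  proof -
    obtain c where "c \<in> D" "x \<in> ball c (e c)" using D(3) \<open>x \<in> S\<close> by blast
    then have "\<bar>g x\<bar> \<le> b c" using eb(2) by auto
    also have "b c \<le> B" unfolding B_def using \<open>c \<in> D\<close> D(2) by (auto intro: Max_ge)
    finally show ?thesis .
  qed
  moreover have "B \<ge> 0" unfolding B_def using D(2) by (auto intro: Max_ge)
  ultimately show ?thesis by blast
qed

lemma bounded_linear_hat: "bounded_linear (hat :: 'b::real_normed_vector \<Rightarrow> 'b ^ 'm)"
  by (rule bounded_linear_intro[where K = "sqrt (real CARD('m))"])
    (simp_all add: hat_def vec_eq_iff norm_vec_def L2_set_def real_sqrt_mult power2_eq_square)

lemma norm_hat: "norm (hat x :: 'b::real_normed_vector ^ 'm) = sqrt (real CARD('m)) * norm x"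
  by (simp add: hat_def norm_vec_def L2_set_def real_sqrt_mult)

lemma hat_diff: "hat (a - b) = hat a - (hat b :: 'b::real_normed_vector ^ 'm)"
  by (simp add: hat_def vec_eq_iff)

locale diagonal_system =
  fixes F :: "real^'n^'m \<Rightarrow> real \<Rightarrow> real^'n^'m"
    and f :: "real^'n \<Rightarrow> real^'n"
    and DF :: "real \<Rightarrow> real^'n^'m \<Rightarrow> ((real^'n^'m) \<Rightarrow>\<^sub>L (real^'n^'m))"
    and \<phi> :: "real^'n^'m \<Rightarrow> real"
  assumes F_hat: "\<And>s t. t \<ge> 0 \<Longrightarrow> F (hat s) t = hat (f s)"
    and F_has_derivative: "\<And>x t. t \<ge> 0 \<Longrightarrow> ((\<lambda>y. F y t) has_derivative blinfun_apply (DF t x)) (at x)"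
    and locally_bounded_\<phi>: "locally_bounded \<phi>"
    and norm_DF_le: "\<And>x t. t \<ge> 0 \<Longrightarrow> norm (DF t x) \<le> \<phi> x"
begin

lemma f_has_derivative: "(f has_derivative frechet_derivative f (at s)) (at s)"
proof -
  fix i :: 'm
  have "((\<lambda>v. v $ i) \<circ> ((\<lambda>y. F y 0) \<circ> hat)
      has_derivative ((\<lambda>v. v $ i) \<circ> (DF 0 (hat s) \<circ> hat))) (at s)"
    by (rule diff_chain_at[OF diff_chain_at[OF bounded_linear_imp_has_derivative[OF bounded_linear_hat]
          F_has_derivative]]) (auto intro: bounded_linear_imp_has_derivative)
  moreover have "(\<lambda>v. v $ i) \<circ> ((\<lambda>y. F y 0) \<circ> hat) = f"
    by (simp add: fun_eq_iff F_hat) (simp add: hat_def)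
  ultimately show ?thesis
    using frechet_derivative_works unfolding differentiable_def by metis
qed

lemma DF_hat_apply_hat:
  assumes "t \<ge> 0"
  shows "DF t (hat s) (hat w) = hat (frechet_derivative f (at s) w)"
proof -
  have hat_deriv: "(hat has_derivative hat) (at s)"
    by (rule bounded_linear_imp_has_derivative[OF bounded_linear_hat])
  have "((\<lambda>y. F y t) \<circ> hat has_derivative (DF t (hat s) \<circ> hat)) (at s)"
    by (rule diff_chain_at[OF hat_deriv F_has_derivative[OF assms]])
  moreover have "(hat \<circ> f has_derivative (hat \<circ> frechet_derivative f (at s))) (at s)"
    by (rule diff_chain_at[OF f_has_derivative bounded_linear_imp_has_derivative[OF bounded_linear_hat]])
  moreover have "(\<lambda>y. F y t) \<circ> hat = hat \<circ> f"
    by (simp add: fun_eq_iff F_hat[OF assms])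
  ultimately have "DF t (hat s) \<circ> hat = hat \<circ> frechet_derivative f (at s)"
    using has_derivative_unique by metis
  then show ?thesis by (metis comp_apply)
qed

lemma DF_hat_bounded_on_compact:
  fixes S :: "(real^'n) set"
  assumes "compact S"
  obtains M where "M \<ge> 0" "\<And>t s w. t \<ge> 0 \<Longrightarrow> s \<in> S \<Longrightarrow> norm (DF t (hat s) w) \<le> M * norm w"
proof -
  have "compact ((hat :: real^'n \<Rightarrow> real^'n^'m) ` S)"
    by (rule compact_continuous_image[OF linear_continuous_on[OF bounded_linear_hat] assms])
  then obtain M where M: "M \<ge> 0" "\<forall>x\<in>hat ` S. \<bar>\<phi> x\<bar> \<le> M"
    using locally_bounded_bounded_on_compact[OF locally_bounded_\<phi>] by blast
  show ?thesis
  proof (rule that[OF M(1)])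
    fix t :: real and s :: "real^'n" and w :: "real^'n^'m"
    assume ts: "t \<ge> 0" "s \<in> S"
    have "norm (DF t (hat s)) \<le> M"
      using norm_DF_le[OF ts(1), of "hat s"] M(2) ts(2) abs_ge_self[of "\<phi> (hat s)"] by fastforce
    then have "norm (DF t (hat s)) * norm w \<le> M * norm w"
      by (rule mult_right_mono) simp
    then show "norm (DF t (hat s) w) \<le> M * norm w"
      using norm_blinfun[of "DF t (hat s)" w] by linarith
  qed
qed

lemma f_lipschitz_on_compact:
  fixes S :: "(real^'n) set"
  assumes "compact S"
  obtains L where "L \<ge> 0" "\<And>a b. a \<in> S \<Longrightarrow> b \<in> S \<Longrightarrow> norm (f a - f b) \<le> L * norm (a - b)"
proof -
  define H where "H = convex hull ((hat :: real^'n \<Rightarrow> real^'n^'m) ` S)"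
  have "compact ((hat :: real^'n \<Rightarrow> real^'n^'m) ` S)"
    by (rule compact_continuous_image[OF linear_continuous_on[OF bounded_linear_hat] assms])
  then have "compact H" unfolding H_def by (rule compact_convex_hull)
  then obtain B where B: "B \<ge> 0" "\<forall>x\<in>H. \<bar>\<phi> x\<bar> \<le> B"
    using locally_bounded_bounded_on_compact[OF locally_bounded_\<phi>] by blast
  have "norm (f a - f b) \<le> B * norm (a - b)" if ab: "a \<in> S" "b \<in> S" for a b
  proof -
    have "norm (F (hat a) 0 - F (hat b) 0) \<le> B * norm (hat a - hat b :: real^'n^'m)"
    proof (rule differentiable_bound[of H "\<lambda>y. F y 0" "\<lambda>x. blinfun_apply (DF 0 x)"])
      show "convex H" unfolding H_def by (rule convex_convex_hull)
      show "((\<lambda>y. F y 0) has_derivative blinfun_apply (DF 0 x)) (at x within H)" for x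
        by (rule has_derivative_at_withinI[OF F_has_derivative]) simp
      show "onorm (blinfun_apply (DF 0 x)) \<le> B" if "x \<in> H" for x
        using norm_DF_le[of 0 x] B(2) that by (force simp: norm_blinfun.rep_eq)
      show "hat a \<in> H" "hat b \<in> H" unfolding H_def using ab by (auto intro: hull_inc)
    qed
    then show ?thesis
      by (simp add: F_hat flip: hat_diff) (simp add: norm_hat mult_ac)
  qed
  with B(1) show ?thesis using that by blast
qed

lemma sum_blocks_eq_reduced_solution:
  assumes t0: "t0 \<ge> 0" and s: "ode_sol f {0..} t0 s0 s" and t: "t \<ge> 0"
    and U: "\<And>v. car_sol (\<lambda>\<tau> x. DF \<tau> (hat (s \<tau>)) x) {0..} t0 v (\<lambda>t. U t v)"
    and Ub: "\<And>u. car_sol (\<lambda>\<tau> y. frechet_derivative f (at (s \<tau>)) y) {0..} t0 u (\<lambda>t. Ub t u)"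
  shows "(\<Sum>j\<in>UNIV. block (U t) i j u) = Ub t u"
proof -
  define e :: "'m \<Rightarrow> real^'n^'m" where "e j = (\<chi> k. if k = j then u else 0)" for j
  have "(\<Sum>j\<in>UNIV. e j) = hat u" by (simp add: e_def hat_def vec_eq_iff)
  then have sum_sol: "car_sol (\<lambda>\<tau> x. DF \<tau> (hat (s \<tau>)) x) {0..} t0 (hat u) (\<lambda>t. \<Sum>j\<in>UNIV. U t (e j))"
    using car_sol_sum[of UNIV t0 "{0..}" "\<lambda>\<tau> x. DF \<tau> (hat (s \<tau>)) x" e "\<lambda>j t. U t (e j)"] U t0
    by (simp add: blinfun.bounded_linear_right bounded_linear.linear)
  have hat_sol: "car_sol (\<lambda>\<tau> x. DF \<tau> (hat (s \<tau>)) x) {0..} t0 (hat u) (\<lambda>t. hat (Ub t u))"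
    by (rule car_sol_linear_image[OF Ub is_interval_ci bounded_linear_hat]) (simp add: DF_hat_apply_hat)
  define I where "I = {min t0 t..max t0 t}"
  have "compact (s ` I)"
    unfolding I_def using continuous_on_subset[OF ode_sol_continuous_on[OF s], of "{min t0 t..max t0 t}"] t0 t
    by (intro compact_continuous_image) auto
  then obtain M where M: "M \<ge> 0" "\<And>\<tau> s' w. \<tau> \<ge> 0 \<Longrightarrow> s' \<in> s ` I \<Longrightarrow> norm (DF \<tau> (hat s') w) \<le> M * norm w"
    using DF_hat_bounded_on_compact by blast
  have "(\<Sum>j\<in>UNIV. U t (e j)) = hat (Ub t u)"
    by (rule car_sol_linear_unique[OF sum_sol hat_sol _ _ M(1)])
      (use M(2) t0 t in \<open>auto simp: I_def blinfun.bounded_linear_right bounded_linear.linear\<close>)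
  then have "(\<Sum>j\<in>UNIV. U t (e j)) $ i = Ub t u" by (simp add: hat_def)
  then show ?thesis
    unfolding block_def e_def[symmetric] by simp
qed

end

locale transition_family = diagonal_system F f DF \<phi>
  for F :: "real^'n^'m \<Rightarrow> real \<Rightarrow> real^'n^'m"
    and f :: "real^'n \<Rightarrow> real^'n"
    and DF :: "real \<Rightarrow> real^'n^'m \<Rightarrow> ((real^'n^'m) \<Rightarrow>\<^sub>L (real^'n^'m))"
    and \<phi> :: "real^'n^'m \<Rightarrow> real" +
  fixes K :: "real^'n^'m \<Rightarrow> real^'n^'m \<Rightarrow> real"
    and W :: "(real^'n) set"
    and sf :: "real \<Rightarrow> real^'n \<Rightarrow> real \<Rightarrow> real^'n"
    and Uf :: "real \<Rightarrow> real \<Rightarrow> real^'n \<Rightarrow> real^'n^'m \<Rightarrow> real^'n^'m"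
  assumes locally_bounded_K: "locally_bounded (case_prod K)"
    and DF_lipschitz: "\<And>x y t. t \<ge> 0 \<Longrightarrow> norm (DF t x - DF t y) \<le> K x y * norm (x - y)"
    and compact_W: "compact W"
    and flow_img_W_antimono: "\<And>t t'. t \<ge> t' \<Longrightarrow> t' \<ge> 0 \<Longrightarrow> flow_img f t W \<subseteq> flow_img f t' W"
    and sf_sol: "\<And>t0 s0. t0 \<ge> 0 \<Longrightarrow> s0 \<in> W \<Longrightarrow> ode_sol f {t0..} t0 s0 (sf t0 s0)"
    and Uf_sol: "\<And>t0 s0 v. t0 \<ge> 0 \<Longrightarrow> s0 \<in> W \<Longrightarrow>
      car_sol (\<lambda>\<tau> x. DF \<tau> (hat (sf t0 s0 \<tau>)) x) {t0..} t0 v (\<lambda>t. Uf t t0 s0 v)"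
begin

lemma sf_in_W:
  assumes "t0 \<ge> 0" "s0 \<in> W" "t0 \<le> \<tau>"
  shows "sf t0 s0 \<tau> \<in> W"
proof -
  have "flow_img f (\<tau> - t0) W \<subseteq> flow_img f 0 W"
    using assms(3) by (intro flow_img_W_antimono) auto
  then show ?thesis
    using ode_sol_in_flow_img[OF sf_sol[OF assms(1,2)] assms(2,3)] flow_img_zero_subset[of f W] by blast
qed

lemma DF_hat_lipschitz_on_W:
  obtains C where "C \<ge> 0"
    "\<And>t a b. t \<ge> 0 \<Longrightarrow> a \<in> W \<Longrightarrow> b \<in> W \<Longrightarrow> norm (DF t (hat a) - DF t (hat b)) \<le> C * norm (a - b)"
proof -
  have "compact ((hat :: real^'n \<Rightarrow> real^'n^'m) ` W)"
    by (rule compact_continuous_image[OF linear_continuous_on[OF bounded_linear_hat] compact_W])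
  then obtain B where B: "B \<ge> 0" "\<forall>p\<in>hat ` W \<times> hat ` W. \<bar>case_prod K p\<bar> \<le> B"
    using locally_bounded_bounded_on_compact[OF locally_bounded_K compact_Times] by blast
  show ?thesis
  proof (rule that[of "B * sqrt (real CARD('m))"])
    show "B * sqrt (real CARD('m)) \<ge> 0" using B(1) by simp
    fix t :: real and a b :: "real^'n"
    assume "t \<ge> 0" "a \<in> W" "b \<in> W"
    then have "K (hat a) (hat b) \<le> B"
      using B(2) abs_ge_self[of "K (hat a) (hat b)"] by fastforce
    then have "norm (DF t (hat a) - DF t (hat b)) \<le> B * norm (hat a - hat b :: real^'n^'m)"
      using DF_lipschitz[OF \<open>t \<ge> 0\<close>, of "hat a" "hat b"]
      by (meson mult_right_mono norm_ge_zero order_trans)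
    then show "norm (DF t (hat a) - DF t (hat b)) \<le> B * sqrt (real CARD('m)) * norm (a - b)"
      by (simp add: norm_hat mult_ac flip: hat_diff)
  qed
qed

lemma transition_exponential_bound:
  obtains \<Phi> where "\<Phi> \<ge> 0"
    "\<And>t0 s0 \<tau> w. t0 \<ge> 0 \<Longrightarrow> s0 \<in> W \<Longrightarrow> t0 \<le> \<tau> \<Longrightarrow> norm (DF \<tau> (hat (sf t0 s0 \<tau>)) w) \<le> \<Phi> * norm w"
    "\<And>t0 s0 r v. t0 \<ge> 0 \<Longrightarrow> s0 \<in> W \<Longrightarrow> t0 \<le> r \<Longrightarrow> norm (Uf r t0 s0 v) \<le> norm v * exp (\<Phi> * (r - t0))"
proof -
  obtain \<Phi> where \<Phi>: "\<Phi> \<ge> 0" "\<And>t s w. t \<ge> 0 \<Longrightarrow> s \<in> W \<Longrightarrow> norm (DF t (hat s) w) \<le> \<Phi> * norm w"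
    using DF_hat_bounded_on_compact[OF compact_W] by blast
  have along: "norm (DF \<tau> (hat (sf t0 s0 \<tau>)) w) \<le> \<Phi> * norm w"
    if "t0 \<ge> 0" "s0 \<in> W" "t0 \<le> \<tau>" for t0 s0 \<tau> w
    using \<Phi>(2) sf_in_W[OF that] that by simp
  have "norm (Uf r t0 s0 v) \<le> norm v * exp (\<Phi> * (r - t0))"
    if "t0 \<ge> 0" "s0 \<in> W" "t0 \<le> r" for t0 s0 r v
    by (rule car_sol_norm_le[OF Uf_sol[OF that(1,2)] \<Phi>(1), of r r]) (use along that in auto)
  with \<Phi>(1) along show ?thesis by (rule that)
qed

lemma transition_bounded:
  assumes "t \<ge> 0"
  shows "\<exists>B. \<forall>t0\<ge>0. \<forall>s0\<in>W. onorm (Uf (t + t0) t0 s0) \<le> B"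
proof -
  obtain \<Phi> where growth: "\<And>t0 s0 r v. t0 \<ge> 0 \<Longrightarrow> s0 \<in> W \<Longrightarrow> t0 \<le> r \<Longrightarrow>
      norm (Uf r t0 s0 v) \<le> norm v * exp (\<Phi> * (r - t0))"
    using transition_exponential_bound by metis
  have "onorm (Uf (t + t0) t0 s0) \<le> exp (\<Phi> * t)" if "t0 \<ge> 0" "s0 \<in> W" for t0 s0
    using growth[OF that, of "t + t0"] assms by (intro onorm_le) (simp add: mult.commute)
  then show ?thesis by blast
qed

lemma transition_lipschitz:
  assumes t: "t \<ge> 0"
  shows "\<exists>R\<ge>0. \<forall>t0\<ge>0. \<forall>s0\<in>W. \<forall>s1\<in>W.
    onorm (\<lambda>v. Uf (t + t0) t0 s1 v - Uf (t + t0) t0 s0 v) \<le> R * dist s1 s0"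
proof -
  obtain \<Phi> where \<Phi>: "\<Phi> \<ge> 0"
    and along: "\<And>t0 s0 \<tau> w. t0 \<ge> 0 \<Longrightarrow> s0 \<in> W \<Longrightarrow> t0 \<le> \<tau> \<Longrightarrow>
      norm (DF \<tau> (hat (sf t0 s0 \<tau>)) w) \<le> \<Phi> * norm w"
    and growth: "\<And>t0 s0 r v. t0 \<ge> 0 \<Longrightarrow> s0 \<in> W \<Longrightarrow> t0 \<le> r \<Longrightarrow>
      norm (Uf r t0 s0 v) \<le> norm v * exp (\<Phi> * (r - t0))"
    using transition_exponential_bound by metis
  obtain L where L: "L \<ge> 0" "\<And>a b. a \<in> W \<Longrightarrow> b \<in> W \<Longrightarrow> norm (f a - f b) \<le> L * norm (a - b)"
    using f_lipschitz_on_compact[OF compact_W] by metis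
  obtain C where C: "C \<ge> 0"
    "\<And>t a b. t \<ge> 0 \<Longrightarrow> a \<in> W \<Longrightarrow> b \<in> W \<Longrightarrow> norm (DF t (hat a) - DF t (hat b)) \<le> C * norm (a - b)"
    using DF_hat_lipschitz_on_W by metis
  define R where "R = C * exp (L * t) * exp (\<Phi> * t) * t * exp (\<Phi> * t)"
  have "onorm (\<lambda>v. Uf (t + t0) t0 s1 v - Uf (t + t0) t0 s0 v) \<le> R * dist s1 s0"
    if t0: "t0 \<ge> 0" and s0: "s0 \<in> W" and s1: "s1 \<in> W" for t0 s0 s1
  proof (rule onorm_le)
    fix v
    define \<delta> where "\<delta> = dist s1 s0 * exp (L * t)"
    have traj: "norm (sf t0 s1 \<tau> - sf t0 s0 \<tau>) \<le> \<delta>" if \<tau>: "\<tau> \<in> {t0..t0 + t}" for \<tau>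
    proof -
      have "norm (sf t0 s1 \<tau> - sf t0 s0 \<tau>) \<le> norm (s1 - s0) * exp (L * (\<tau> - t0))"
        by (rule ode_sol_dist_le[OF sf_sol[OF t0 s1] sf_sol[OF t0 s0] L(1) _ \<tau>])
          (use L(2) sf_in_W t0 s0 s1 in auto)
      also have "\<dots> \<le> \<delta>"
        unfolding \<delta>_def dist_norm using \<tau> L(1) by (intro mult_left_mono) (auto intro: mult_left_mono)
      finally show ?thesis .
    qed
    have defect: "norm (DF \<tau> (hat (sf t0 s1 \<tau>)) (Uf \<tau> t0 s0 v) - DF \<tau> (hat (sf t0 s0 \<tau>)) (Uf \<tau> t0 s0 v))
        \<le> C * \<delta> * (norm v * exp (\<Phi> * t))" if \<tau>: "\<tau> \<in> {t0..t0 + t}" for \<tau>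
    proof -
      have "norm (DF \<tau> (hat (sf t0 s1 \<tau>)) (Uf \<tau> t0 s0 v) - DF \<tau> (hat (sf t0 s0 \<tau>)) (Uf \<tau> t0 s0 v))
          \<le> norm (DF \<tau> (hat (sf t0 s1 \<tau>)) - DF \<tau> (hat (sf t0 s0 \<tau>))) * norm (Uf \<tau> t0 s0 v)"
        using norm_blinfun[of "DF \<tau> (hat (sf t0 s1 \<tau>)) - DF \<tau> (hat (sf t0 s0 \<tau>))"]
        by (simp add: blinfun.diff_left)
      also have "\<dots> \<le> (C * \<delta>) * (norm v * exp (\<Phi> * t))"
      proof (rule mult_mono)
        have "norm (DF \<tau> (hat (sf t0 s1 \<tau>)) - DF \<tau> (hat (sf t0 s0 \<tau>)))
            \<le> C * norm (sf t0 s1 \<tau> - sf t0 s0 \<tau>)"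
          using C(2) sf_in_W t0 s0 s1 \<tau> by auto
        also have "\<dots> \<le> C * \<delta>" using traj[OF \<tau>] C(1) by (rule mult_left_mono)
        finally show "norm (DF \<tau> (hat (sf t0 s1 \<tau>)) - DF \<tau> (hat (sf t0 s0 \<tau>))) \<le> C * \<delta>" .
        have "norm (Uf \<tau> t0 s0 v) \<le> norm v * exp (\<Phi> * (\<tau> - t0))"
          using growth t0 s0 \<tau> by auto
        also have "\<dots> \<le> norm v * exp (\<Phi> * t)"
          using \<tau> \<Phi> by (intro mult_left_mono) (auto intro: mult_left_mono)
        finally show "norm (Uf \<tau> t0 s0 v) \<le> norm v * exp (\<Phi> * t)" .
      qed (use C(1) \<delta>_def in auto)
      finally show ?thesis .
    qed
    have "norm (Uf (t + t0) t0 s1 v - Uf (t + t0) t0 s0 v)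
        \<le> C * \<delta> * (norm v * exp (\<Phi> * t)) * (t0 + t - t0) * exp (\<Phi> * (t + t0 - t0))"
      by (rule car_sol_perturbation[OF Uf_sol[OF t0 s1] Uf_sol[OF t0 s0] _ \<Phi> _ _ defect])
        (use along t0 s1 C(1) t in \<open>auto simp: \<delta>_def blinfun.bounded_linear_right bounded_linear.linear\<close>)
    also have "\<dots> = R * dist s1 s0 * norm v"
      unfolding R_def \<delta>_def by (simp add: mult_ac)
    finally show "norm (Uf (t + t0) t0 s1 v - Uf (t + t0) t0 s0 v) \<le> R * dist s1 s0 * norm v" .
  qed
  moreover have "R \<ge> 0" unfolding R_def using C(1) t by simp
  ultimately show ?thesis by blast
qed

lemma transition_equicontinuous:
  assumes "t \<ge> 0" and s0: "s0 \<in> W" and e: "e > 0"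
  shows "\<exists>d>0. \<forall>t0\<ge>0. \<forall>s1\<in>W. dist s1 s0 < d \<longrightarrow>
    onorm (\<lambda>v. Uf (t + t0) t0 s1 v - Uf (t + t0) t0 s0 v) < e"
proof -
  obtain R where R: "R \<ge> 0" "\<And>t0 s1. t0 \<ge> 0 \<Longrightarrow> s1 \<in> W \<Longrightarrow>
      onorm (\<lambda>v. Uf (t + t0) t0 s1 v - Uf (t + t0) t0 s0 v) \<le> R * dist s1 s0"
    using transition_lipschitz[OF assms(1)] s0 by blast
  show ?thesis
  proof (intro exI[of _ "e / (R + 1)"] conjI allI impI ballI)
    show "e / (R + 1) > 0" using e R(1) by simp
    fix t0 :: real and s1 assume t0: "t0 \<ge> 0" and s1: "s1 \<in> W" and close: "dist s1 s0 < e / (R + 1)"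
    have "onorm (\<lambda>v. Uf (t + t0) t0 s1 v - Uf (t + t0) t0 s0 v) \<le> R * dist s1 s0"
      by (rule R(2)[OF t0 s1])
    also have "\<dots> \<le> R * (e / (R + 1))"
      using close R(1) by (intro mult_left_mono) auto
    also have "\<dots> < e"
      using e R(1) by (simp add: field_simps)
    finally show "onorm (\<lambda>v. Uf (t + t0) t0 s1 v - Uf (t + t0) t0 s0 v) < e" .
  qed
qed

end

theorem lemma5:
  fixes F :: "real^'n^'m \<Rightarrow> real \<Rightarrow> real^'n^'m"
    and f :: "real^'n \<Rightarrow> real^'n"
    and DF :: "real \<Rightarrow> real^'n^'m \<Rightarrow> ((real^'n^'m) \<Rightarrow>\<^sub>L (real^'n^'m))"
    and \<phi> :: "real^'n^'m \<Rightarrow> real"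
    and K :: "real^'n^'m \<Rightarrow> real^'n^'m \<Rightarrow> real"
    and A W :: "(real^'n) set"
  assumes A1a: "\<And>s t. t \<ge> 0 \<Longrightarrow> F (hat s) t = hat (f s)"
    and A1b: "\<And>x t. t \<ge> 0 \<Longrightarrow> ((\<lambda>y. F y t) has_derivative blinfun_apply (DF t x)) (at x)"
    and A1b': "\<And>t. t \<ge> 0 \<Longrightarrow> continuous_on UNIV (DF t)"
    and A1c: "locally_bounded \<phi>" "\<And>x t. t \<ge> 0 \<Longrightarrow> norm (DF t x) \<le> \<phi> x"
    and A1d: "locally_bounded (case_prod K)"
      "\<And>x y t. t \<ge> 0 \<Longrightarrow> norm (DF t x - DF t y) \<le> K x y * norm (x - y)"
    and A1e: "\<And>x. (\<lambda>t. F x t) \<in> borel_measurable (restrict_space lborel {0..})"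
      "\<And>x. (\<lambda>t. DF t x) \<in> borel_measurable (restrict_space lborel {0..})"
    and A2: "compact A"
    and A2a: "\<And>t. t \<ge> 0 \<Longrightarrow> flow_img f t A \<subseteq> A"
    and A2b: "\<exists>U. open U \<and> bounded U \<and> A \<subseteq> U \<and> (\<Inter>t\<in>{0..}. flow_img f t (closure U)) = A"
    and A2c: "\<exists>s0\<in>A. omega_limit f s0 = A"
    and W: "compact W" "A \<subseteq> interior W"
      "\<And>t t'. t \<ge> t' \<Longrightarrow> t' \<ge> 0 \<Longrightarrow> flow_img f t W \<subseteq> flow_img f t' W"
      "(\<Inter>t\<in>{0..}. flow_img f t W) = A"
  shows
    "(\<forall>t0 s0 s U Ub. t0 \<ge> 0 \<and> ode_sol f {0..} t0 s0 s
        \<and> (\<forall>v. car_sol (\<lambda>\<tau> x. DF \<tau> (hat (s \<tau>)) x) {0..} t0 v (\<lambda>t. U t v))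
        \<and> (\<forall>u. car_sol (\<lambda>\<tau> y. frechet_derivative f (at (s \<tau>)) y) {0..} t0 u (\<lambda>t. Ub t u))
        \<longrightarrow> (\<forall>t\<ge>0. \<forall>i u. (\<Sum>j\<in>UNIV. block (U t) i j u) = Ub t u))
   \<and> (\<forall>sf Uf. (\<forall>t0\<ge>0. \<forall>s0\<in>W. ode_sol f {t0..} t0 s0 (sf t0 s0)
          \<and> (\<forall>v. car_sol (\<lambda>\<tau> x. DF \<tau> (hat (sf t0 s0 \<tau>)) x) {t0..} t0 v (\<lambda>t. Uf t t0 s0 v)))
        \<longrightarrow> (\<forall>t\<ge>0.
              (\<exists>B. \<forall>t0\<ge>0. \<forall>s0\<in>W. onorm (Uf (t + t0) t0 s0) \<le> B)
            \<and> (\<forall>s0\<in>W. \<forall>e>0. \<exists>d>0. \<forall>t0\<ge>0. \<forall>s1\<in>W. dist s1 s0 < d \<longrightarrow>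
                 onorm (\<lambda>v. Uf (t + t0) t0 s1 v - Uf (t + t0) t0 s0 v) < e)))"
  \<comment> \<open>The solutions are given rather than constructed.\<close>
proof -
  interpret diagonal_system F f DF \<phi>
    using A1a A1b A1c by unfold_locales
  show ?thesis
  proof (intro conjI allI impI)
    fix t0 s0 s U Ub t i u
    assume "t0 \<ge> 0 \<and> ode_sol f {0..} t0 s0 s
        \<and> (\<forall>v. car_sol (\<lambda>\<tau> x. DF \<tau> (hat (s \<tau>)) x) {0..} t0 v (\<lambda>t. U t v))
        \<and> (\<forall>u. car_sol (\<lambda>\<tau> y. frechet_derivative f (at (s \<tau>)) y) {0..} t0 u (\<lambda>t. Ub t u))"
      and "(0::real) \<le> t"
    then show "(\<Sum>j\<in>UNIV. block (U t) i j u) = Ub t u"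
      using sum_blocks_eq_reduced_solution by blast
  next
    fix sf Uf t
    assume sol: "\<forall>t0\<ge>0. \<forall>s0\<in>W. ode_sol f {t0..} t0 s0 (sf t0 s0)
          \<and> (\<forall>v. car_sol (\<lambda>\<tau> x. DF \<tau> (hat (sf t0 s0 \<tau>)) x) {t0..} t0 v (\<lambda>t. Uf t t0 s0 v))"
      and t: "(0::real) \<le> t"
    interpret transition_family F f DF \<phi> K W sf Uf
      using A1d W(1,3) sol by unfold_locales auto
    show "\<exists>B. \<forall>t0\<ge>0. \<forall>s0\<in>W. onorm (Uf (t + t0) t0 s0) \<le> B"
      by (rule transition_bounded[OF t])
    show "\<forall>s0\<in>W. \<forall>e>0. \<exists>d>0. \<forall>t0\<ge>0. \<forall>s1\<in>W. dist s1 s0 < d \<longrightarrow>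
        onorm (\<lambda>v. Uf (t + t0) t0 s1 v - Uf (t + t0) t0 s0 v) < e"
      using transition_equicontinuous[OF t] by blast
  qed
qed

end
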